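(* Let $\lambda$ be a countable limit ordinal and let $\rho<\lambda$ be an isolated ordinal. Then there are a surjection $\diamond_{\rho,\lambda}\colon [\rho,\lambda) \to \mathrm{LIM}((\rho,\lambda])$, a mapping $\ell_{\rho,\lambda}\colon [\rho,\lambda] \to \omega \setminus \{0\}$, and a mapping $a_{\rho,\lambda}\colon \mathrm{LIM}((\rho,\lambda]) \times \omega \to [\rho,\lambda)$ such that: (a) for every $\beta \in [\rho,\lambda)$ there exists a positive integer $s$ with $\beta < \diamond_{\rho,\lambda}(\beta) < \diamond_{\rho,\lambda}^2(\beta)<\dots<\diamond_{\rho,\lambda}^{s}(\beta)=\lambda$ (where $\diamond^k$ denotes the $k$-fold iterate); (b) for every $\mu \in \mathrm{LIM}((\rho,\lambda])$: the sequence $(a_{\rho,\lambda}(\mu,k))_{k=0}^{\infty}$ is increasing with limit $\mu$; $\diamond_{\rho,\lambda}^{-1}(\mu) = \{a_{\rho,\lambda}(\mu,k) : k \in \omega\}$; $\ell_{\rho,\lambda}(a_{\rho,\lambda}(\mu,k))=\ell_{\rho,\lambda}(\mu)+k$ for all $k\in\omega$; moreover $\ell_{\rho,\lambda}(\lambda) = 1$ and $\ell_{\rho,\lambda}(\rho) = 1$; (c) for every $\beta \in [\rho,\lambda)$ and every $\gamma \in (\beta,\diamond_{\rho,\lambda}(\beta))$ we have $\ell_{\rho,\lambda}(\gamma)>\ell_{\rho,\lambda}(\beta)$ and $\diamond_{\rho,\lambda}(\gamma)\le\diamond_{\rho,\lambda}(\beta)$; (d) for every $\beta \in [\rho,\lambda)$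 we have $\ell_{\rho,\lambda}(\beta+1)=\ell_{\rho,\lambda}(\beta)+1$.
   Context: An ordinal is isolated if it is not a limit ordinal (so $0$ and successor ordinals are isolated). For a set $A$ of ordinals, $\mathrm{LIM}(A)$ denotes the set of limit ordinals in $A$. Intervals such as $[\rho,\lambda)$ are intervals of ordinals. *)

theory Defs
  imports Main "HOL-Library.Countable_Set"
begin

text \<open>Ordinals are modelled as elements of an arbitrary well-ordered type.
  The ordinals up to lam correspond to the initial segment at lam.\<close>

definition is_limit :: "'a::wellorder \<Rightarrow> bool" where
  "is_limit x \<longleftrightarrow> (\<exists>y. y < x) \<and> (\<forall>y. y < x \<longrightarrow> (\<exists>z. y < z \<and> z < x))"

definition isolated :: "'a::wellorder \<Rightarrow> bool" where
  "isolated x \<longleftrightarrow> \<not> is_limit x"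

definition osucc :: "'a::wellorder \<Rightarrow> 'a" where
  "osucc b = (LEAST c. b < c)"

definition LIMs :: "'a::wellorder set \<Rightarrow> 'a set" where
  "LIMs A = {x \<in> A. is_limit x}"

end

theory Submission
  imports Defs
begin

(* Induction on lam.  Choose a ladder rho = c 0 < c 1 < ... cofinal in lam in which each c (k+1)
   is the successor of c k or a limit: if the limits below lam are cofinal, let c (k+1) be the least
   limit above both c k and the k-th point of an enumeration of the countable set below lam;
   otherwise climb by successors from rho or from the last limit below lam.  A nonempty gap
   (c k, c (k+1)) is then [c k + 1, c (k+1)) with c (k+1) a limit below lam, so the induction
   hypothesis provides a structure D k, L k, A k on it.  Gluing: dia maps every c k to lam and agrees
   with D k on the k-th gap, ell (c k) = k + 1 and ell = L k + k + 1 on the k-th gap and at its right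
   end point, a lam = c, and a mu = A k mu for the limits mu in (c k, c (k+1)]. *)

lemma less_osucc: "(b::'a::wellorder) < x \<Longrightarrow> b < osucc b"
  unfolding osucc_def by (rule LeastI)

lemma osucc_leI: "(b::'a::wellorder) < c \<Longrightarrow> osucc b \<le> c"
  unfolding osucc_def by (rule Least_le)

lemma not_limit_osucc: "(b::'a::wellorder) < x \<Longrightarrow> \<not> is_limit (osucc b)"
  unfolding is_limit_def by (meson less_osucc osucc_leI leD)

lemma osucc_less_limit: "is_limit l \<Longrightarrow> (b::'a::wellorder) < l \<Longrightarrow> osucc b < l"
  by (metis osucc_leI not_limit_osucc order.not_eq_order_implies_strict)

lemma not_limit_eq_osucc:
  fixes v :: "'a::wellorder"
  assumes "\<not> is_limit v" and "y < v"
  obtains u where "u < v" and "v = osucc u"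
proof -
  from assms obtain u where u: "u < v" "\<And>z. u < z \<Longrightarrow> \<not> z < v"
    unfolding is_limit_def by blast
  then have "v = osucc u"
    by (metis less_osucc osucc_leI order.not_eq_order_implies_strict)
  with u(1) show thesis by (rule that)
qed

lemma atLeastLessThan_osucc: "(x::'a::wellorder) < y \<Longrightarrow> {osucc x..<y} = {x<..<y}"
  using less_osucc[of x y] by (auto intro: osucc_leI less_le_trans)

lemma atLeastAtMost_osucc: "(x::'a::wellorder) < y \<Longrightarrow> {osucc x..y} = {x<..y}"
  using less_osucc[of x y] by (auto intro: osucc_leI less_le_trans)

lemma LIMs_greaterThanAtMost_osucc:
  assumes "(x::'a::wellorder) < y"
  shows "LIMs {osucc x<..y} = LIMs {x<..y}"
proof -
  have "is_limit m \<Longrightarrow> x < m \<Longrightarrow> osucc x < m" for m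
    using osucc_leI[of x m] not_limit_osucc[OF assms] by (auto simp: order.order_iff_strict)
  then show ?thesis
    unfolding LIMs_def using less_osucc[OF assms] by (auto dest: less_trans)
qed

lemma limit_above_strict_mono:
  fixes x :: "nat \<Rightarrow> 'a::wellorder"
  assumes "strict_mono x" and "\<And>k. x k < u"
  obtains M where "is_limit M" and "M \<le> u" and "\<And>k. x k < M"
proof -
  define M where "M = (LEAST M. \<forall>k. x k < M)"
  have bound: "\<forall>k. x k < M"
    unfolding M_def by (rule LeastI[of _ u]) (simp add: assms(2))
  have "M \<le> u"
    unfolding M_def by (rule Least_le) (simp add: assms(2))
  moreover have "is_limit M"
    unfolding is_limit_def
  proof (intro conjI allI impI)
    show "\<exists>y. y < M" using bound by blast
    fix y assume "y < M"
    then have "\<not> (\<forall>k. x k < y)"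
      unfolding M_def by (rule not_less_Least)
    then obtain k where "y \<le> x k"
      by (auto simp: not_less)
    moreover have "x k < x (Suc k)"
      using assms(1) by (simp add: strict_mono_Suc_iff)
    ultimately show "\<exists>z. y < z \<and> z < M"
      using bound by (meson le_less_trans)
  qed
  ultimately show thesis using bound that by blast
qed

locale diamond_structure =
  fixes rho lam :: "'a::wellorder" and dia :: "'a \<Rightarrow> 'a" and ell :: "'a \<Rightarrow> nat"
    and a :: "'a \<Rightarrow> nat \<Rightarrow> 'a"
  assumes dia_image: "dia ` {rho..<lam} = LIMs {rho<..lam}"
    and ell_pos: "b \<in> {rho..lam} \<Longrightarrow> 0 < ell b"
    and a_range: "\<mu> \<in> LIMs {rho<..lam} \<Longrightarrow> a \<mu> k \<in> {rho..<lam}"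
    and dia_iterates: "b \<in> {rho..<lam} \<Longrightarrow>
      \<exists>s>0. (dia ^^ s) b = lam \<and> (\<forall>k<s. (dia ^^ k) b < (dia ^^ Suc k) b)"
    and a_strict_mono: "\<mu> \<in> LIMs {rho<..lam} \<Longrightarrow> strict_mono (a \<mu>)"
    and a_less: "\<mu> \<in> LIMs {rho<..lam} \<Longrightarrow> a \<mu> k < \<mu>"
    and a_cofinal: "\<mu> \<in> LIMs {rho<..lam} \<Longrightarrow> g < \<mu> \<Longrightarrow> \<exists>k. g < a \<mu> k"
    and dia_fibre: "\<mu> \<in> LIMs {rho<..lam} \<Longrightarrow> {b\<in>{rho..<lam}. dia b = \<mu>} = range (a \<mu>)"
    and ell_a: "\<mu> \<in> LIMs {rho<..lam} \<Longrightarrow> ell (a \<mu> k) = ell \<mu> + k"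
    and ell_lam: "ell lam = 1"
    and ell_rho: "ell rho = 1"
    and ell_between: "b \<in> {rho..<lam} \<Longrightarrow> b < g \<Longrightarrow> g < dia b \<Longrightarrow> ell b < ell g"
    and dia_between: "b \<in> {rho..<lam} \<Longrightarrow> b < g \<Longrightarrow> g < dia b \<Longrightarrow> dia g \<le> dia b"
    and ell_osucc: "b \<in> {rho..<lam} \<Longrightarrow> ell (osucc b) = ell b + 1"

locale ladder =
  fixes rho lam :: "'a::wellorder" and c :: "nat \<Rightarrow> 'a"
  assumes ladder_0: "c 0 = rho"
    and ladder_strict_mono: "strict_mono c"
    and ladder_less: "c k < lam"
    and ladder_cofinal: "g < lam \<Longrightarrow> \<exists>k. g < c k"
    and ladder_step: "c (Suc k) = osucc (c k) \<or> is_limit (c (Suc k))"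

lemma ladder_of_limits:
  fixes rho lam :: "'a::wellorder"
  assumes "countable {x. x < lam}" and "rho < lam"
    and limits_cofinal: "\<And>x. x < lam \<Longrightarrow> \<exists>m. is_limit m \<and> x < m \<and> m < lam"
  shows "\<exists>c. ladder rho lam c"
proof -
  define e where "e = from_nat_into {x. x < lam}"
  have e: "range e = {x. x < lam}"
  proof -
    have "{x. x < lam} \<noteq> {}" using \<open>rho < lam\<close> by blast
    then show ?thesis unfolding e_def using assms(1) by (rule range_from_nat_into)
  qed
  define next_limit where "next_limit x = (LEAST m. is_limit m \<and> x < m \<and> m < lam)" for x
  have next_limit: "is_limit (next_limit x) \<and> x < next_limit x \<and> next_limit x < lam"
    if "x < lam" for x
    unfolding next_limit_def using limits_cofinal[OF that] by (rule LeastI_ex)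
  define c where "c = rec_nat rho (\<lambda>k y. next_limit (max y (e k)))"
  have c_Suc: "c (Suc k) = next_limit (max (c k) (e k))" for k
    unfolding c_def by simp
  have c_less: "c k < lam" for k
  proof (induction k)
    case (Suc k)
    have "e k < lam" using e by blast
    with Suc show ?case using next_limit by (simp add: c_Suc)
  qed (simp add: c_def \<open>rho < lam\<close>)
  have step: "is_limit (c (Suc k)) \<and> c k < c (Suc k) \<and> e k < c (Suc k)" for k
    using next_limit[of "max (c k) (e k)"] c_less[of k] e by (auto simp: c_Suc)
  show ?thesis
  proof (rule exI, rule ladder.intro)
    show "c 0 = rho" by (simp add: c_def)
    show "strict_mono c" using step by (simp add: strict_mono_Suc_iff)
    show "c k < lam" for k by (rule c_less)
    show "c (Suc k) = osucc (c k) \<or> is_limit (c (Suc k))" for k using step by blast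
    fix g assume "g < lam"
    then obtain k where "g = e k" using e by blast
    then show "\<exists>k. g < c k" using step by blast
  qed
qed

lemma osucc_iterates_cofinal:
  fixes s lam :: "'a::wellorder"
  assumes lam: "is_limit lam" and "s < lam"
    and no_limit: "\<And>m. is_limit m \<Longrightarrow> s < m \<Longrightarrow> lam \<le> m"
  shows "(osucc ^^ j) s < lam"
    and "strict_mono (\<lambda>j. (osucc ^^ j) s)"
    and "g < lam \<Longrightarrow> \<exists>j. g < (osucc ^^ j) s"
proof -
  show less: "(osucc ^^ j) s < lam" for j
    by (induction j) (simp_all add: \<open>s < lam\<close> osucc_less_limit[OF lam])
  show mono: "strict_mono (\<lambda>j. (osucc ^^ j) s)"
    unfolding strict_mono_Suc_iff using less_osucc[OF less] by simp
  assume "g < lam"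
  show "\<exists>j. g < (osucc ^^ j) s"
  proof (rule ccontr)
    assume "\<not> ?thesis"
    then have "(osucc ^^ j) s < osucc g" for j
      using less_osucc[OF \<open>g < lam\<close>] by (auto simp: not_less intro: le_less_trans)
    then obtain M where M: "is_limit M" "M \<le> osucc g" "\<And>j. (osucc ^^ j) s < M"
      using limit_above_strict_mono[OF mono] by blast
    have "s < M" using M(3)[of 0] by simp
    moreover have "M < lam"
      using M(2) osucc_less_limit[OF lam \<open>g < lam\<close>] by simp
    ultimately show False using no_limit[OF M(1)] by simp
  qed
qed

lemma last_limit_below:
  fixes rho lam :: "'a::wellorder"
  assumes "rho < lam" and "x < lam" and no_limit: "\<And>m. is_limit m \<Longrightarrow> x < m \<Longrightarrow> lam \<le> m"
  obtains v where "rho \<le> v" and "v < lam" and "v = rho \<or> is_limit v"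
    and "\<And>m. is_limit m \<Longrightarrow> v < m \<Longrightarrow> lam \<le> m"
proof -
  define P where "P y \<longleftrightarrow> rho \<le> y \<and> y < lam \<and> (\<forall>m. is_limit m \<and> y < m \<longrightarrow> lam \<le> m)" for y
  have "P (max rho x)"
    unfolding P_def using assms by auto
  then have v: "P (Least P)" by (rule LeastI)
  have "Least P = rho \<or> is_limit (Least P)"
  proof (rule ccontr)
    assume "\<not> ?thesis"
    then have "\<not> is_limit (Least P)" "rho < Least P"
      using v by (auto simp: P_def)
    then obtain u where u: "u < Least P" "Least P = osucc u"
      by (rule not_limit_eq_osucc)
    have "P u"
      unfolding P_def
    proof (intro conjI allI impI)
      show "rho \<le> u"
        using \<open>rho < Least P\<close> u osucc_leI by (metis not_less)
      show "u < lam" using u v by (auto simp: P_def)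
      fix m assume m: "is_limit m \<and> u < m"
      then have "Least P < m"
        using u osucc_leI \<open>\<not> is_limit (Least P)\<close> by (metis order.not_eq_order_implies_strict)
      then show "lam \<le> m" using v m by (auto simp: P_def)
    qed
    then show False
      using u(1) Least_le[of P u] by simp
  qed
  with v show thesis
    using that unfolding P_def by blast
qed

lemma ladder_of_successors:
  fixes rho lam :: "'a::wellorder"
  assumes lam: "is_limit lam" and "rho < lam"
    and "x < lam" and "\<And>m. is_limit m \<Longrightarrow> x < m \<Longrightarrow> lam \<le> m"
  shows "\<exists>c. ladder rho lam c"
proof -
  obtain v where v: "rho \<le> v" "v < lam" "v = rho \<or> is_limit v"
    and no_limit_v: "\<And>m. is_limit m \<Longrightarrow> v < m \<Longrightarrow> lam \<le> m"
    using last_limit_below assms(2-4) by blast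
  define s where "s = (if v = rho then osucc rho else v)"
  have s: "rho < s" "s < lam" "v \<le> s" "s = osucc rho \<or> is_limit s"
    using v less_osucc[OF \<open>rho < lam\<close>] osucc_less_limit[OF lam \<open>rho < lam\<close>]
    by (auto simp: s_def)
  have no_limit: "\<And>m. is_limit m \<Longrightarrow> s < m \<Longrightarrow> lam \<le> m"
    using no_limit_v s(3) by (meson le_less_trans)
  have iter: "(osucc ^^ j) s < lam" "strict_mono (\<lambda>j. (osucc ^^ j) s)"
      "g < lam \<Longrightarrow> \<exists>j. g < (osucc ^^ j) s" for j g
    using osucc_iterates_cofinal[OF lam s(2)] no_limit by blast+
  define c where "c k = (case k of 0 \<Rightarrow> rho | Suc j \<Rightarrow> (osucc ^^ j) s)" for k
  show ?thesis
  proof (rule exI, rule ladder.intro)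
    show "c 0 = rho" by (simp add: c_def)
    show "c k < lam" for k
      using iter(1) \<open>rho < lam\<close> by (simp add: c_def split: nat.split)
    show "strict_mono c"
      using s(1) iter(2) by (auto simp: c_def strict_mono_Suc_iff split: nat.split)
    show "c (Suc k) = osucc (c k) \<or> is_limit (c (Suc k))" for k
      using s(4) by (simp add: c_def split: nat.split)
    show "\<exists>k. g < c k" if g: "g < lam" for g
    proof -
      obtain j where "g < (osucc ^^ j) s" using iter(3)[OF g] by blast
      then show ?thesis by (intro exI[of _ "Suc j"]) (simp add: c_def)
    qed
  qed
qed

lemma ladder_exists:
  fixes rho lam :: "'a::wellorder"
  assumes "is_limit lam" and "countable {x. x < lam}" and "rho < lam"
  shows "\<exists>c. ladder rho lam c"
proof (cases "\<forall>x<lam. \<exists>m. is_limit m \<and> x < m \<and> m < lam")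
  case True
  then show ?thesis using ladder_of_limits assms(2,3) by blast
next
  case False
  then obtain x where "x < lam" "\<And>m. is_limit m \<Longrightarrow> x < m \<Longrightarrow> lam \<le> m"
    by (meson not_less)
  then show ?thesis using ladder_of_successors assms(1,3) by blast
qed

lemma segment_co_exists:
  fixes c :: "nat \<Rightarrow> 'a::linorder"
  assumes "c 0 \<le> b" and "b < c n"
  shows "\<exists>k. c k \<le> b \<and> b < c (Suc k)"
  using assms(2) by (induction n) (use assms(1) not_less in auto)

lemma segment_oc_exists:
  fixes c :: "nat \<Rightarrow> 'a::linorder"
  assumes "c 0 < b" and "b \<le> c n"
  shows "\<exists>k. c k < b \<and> b \<le> c (Suc k)"
  using assms(2) by (induction n) (use assms(1) not_le in auto)

context ladder
begin

lemma ladder_limit: "is_limit lam"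
  unfolding is_limit_def using ladder_less ladder_cofinal by blast

lemma ladder_less_iff: "c i < c j \<longleftrightarrow> i < j"
  using ladder_strict_mono by (rule strict_mono_less)

lemma ladder_le_iff: "c i \<le> c j \<longleftrightarrow> i \<le> j"
  using ladder_strict_mono by (rule strict_mono_less_eq)

lemma rho_le_ladder: "rho \<le> c k"
  using ladder_le_iff[of 0 k] ladder_0 by simp

lemma rho_less_lam: "rho < lam"
  using ladder_0 ladder_less by blast

lemma segment_co_unique:
  assumes "c k \<le> b" "b < c (Suc k)" "c j \<le> b" "b < c (Suc j)"
  shows "j = k"
  using assms ladder_le_iff[of "Suc j" k] ladder_le_iff[of "Suc k" j] by fastforce

lemma segment_oc_unique:
  assumes "c k < m" "m \<le> c (Suc k)" "c j < m" "m \<le> c (Suc j)"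
  shows "j = k"
  using assms ladder_le_iff[of "Suc j" k] ladder_le_iff[of "Suc k" j] by fastforce

definition index_co :: "'a \<Rightarrow> nat" where
  "index_co b = (THE k. c k \<le> b \<and> b < c (Suc k))"

definition index_oc :: "'a \<Rightarrow> nat" where
  "index_oc m = (THE k. c k < m \<and> m \<le> c (Suc k))"

lemma index_co_eq: "c k \<le> b \<Longrightarrow> b < c (Suc k) \<Longrightarrow> index_co b = k"
  unfolding index_co_def using segment_co_unique by blast

lemma index_oc_eq: "c k < m \<Longrightarrow> m \<le> c (Suc k) \<Longrightarrow> index_oc m = k"
  unfolding index_oc_def using segment_oc_unique by blast

lemma index_co_ladder: "index_co (c k) = k"
  by (rule index_co_eq) (simp_all add: ladder_less_iff)

lemma ladder_cases:
  assumes "rho \<le> b" and "b < lam"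
  obtains (ladder) k where "b = c k"
    | (gap) k where "c k < b" and "b < c (Suc k)"
proof -
  obtain n where "b < c n" using ladder_cofinal assms(2) by blast
  then obtain k where "c k \<le> b" "b < c (Suc k)"
    using segment_co_exists[of c b n] assms(1) ladder_0 by blast
  then show thesis using that by (auto simp: order.order_iff_strict)
qed

lemma gap_not_ladder: "c k < b \<Longrightarrow> b < c (Suc k) \<Longrightarrow> b \<notin> range c"
  by (auto simp: ladder_less_iff)

lemma gap_subset: "{c k<..<c (Suc k)} \<subseteq> {rho..<lam}"
  using rho_le_ladder[of k] ladder_less[of "Suc k"] by auto

lemma LIMs_segment_subset: "LIMs {c k<..c (Suc k)} \<subseteq> LIMs {rho<..lam}"
  using rho_le_ladder[of k] ladder_less[of "Suc k"] unfolding LIMs_def by auto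

lemma gap_limit: "c k < b \<Longrightarrow> b < c (Suc k) \<Longrightarrow> is_limit (c (Suc k))"
  using ladder_step[of k] osucc_leI[of "c k" b] by auto

lemma segment_limit:
  assumes "c k < m" "m \<le> c (Suc k)" "is_limit m"
  shows "is_limit (c (Suc k))"
  using assms ladder_step[of k] osucc_leI[of "c k" m] not_limit_osucc[OF assms(1)]
  by (auto simp: order.order_iff_strict)

lemma limit_segment:
  assumes "m \<in> LIMs {rho<..lam}" and "m \<noteq> lam"
  obtains k where "c k < m" and "m \<le> c (Suc k)" and "is_limit (c (Suc k))"
    and "m \<in> LIMs {c k<..c (Suc k)}" and "index_oc m = k"
proof -
  have m: "rho < m" "m < lam" "is_limit m" using assms by (auto simp: LIMs_def)
  obtain n where "m < c n" using ladder_cofinal m(2) by blast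
  then obtain k where k: "c k < m" "m \<le> c (Suc k)"
    using segment_oc_exists[of c m n] m(1) ladder_0 by (auto simp: less_imp_le)
  moreover have "is_limit (c (Suc k))" using segment_limit k m(3) .
  ultimately show thesis using that m(3) index_oc_eq by (simp add: LIMs_def)
qed

lemma gap_osucc_eqs:
  "{osucc (c k)..<c (Suc k)} = {c k<..<c (Suc k)}"
  "{osucc (c k)..c (Suc k)} = {c k<..c (Suc k)}"
  "LIMs {osucc (c k)<..c (Suc k)} = LIMs {c k<..c (Suc k)}"
  using ladder_less_iff[of k "Suc k"]
  by (simp_all add: atLeastLessThan_osucc atLeastAtMost_osucc LIMs_greaterThanAtMost_osucc)

end

locale ladder_gluing = ladder rho lam c
  for rho lam :: "'a::wellorder" and c :: "nat \<Rightarrow> 'a" +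
  fixes D :: "nat \<Rightarrow> 'a \<Rightarrow> 'a" and L :: "nat \<Rightarrow> 'a \<Rightarrow> nat" and A :: "nat \<Rightarrow> 'a \<Rightarrow> nat \<Rightarrow> 'a"
  assumes gap_structure:
    "is_limit (c (Suc k)) \<Longrightarrow> diamond_structure (osucc (c k)) (c (Suc k)) (D k) (L k) (A k)"
begin

definition glued_dia :: "'a \<Rightarrow> 'a" where
  "glued_dia b = (if b \<in> range c then lam else D (index_co b) b)"

definition glued_ell :: "'a \<Rightarrow> nat" where
  "glued_ell b = (if b = lam then 1 else if b \<in> range c then Suc (index_co b)
    else L (index_co b) b + index_co b + 1)"

definition glued_a :: "'a \<Rightarrow> nat \<Rightarrow> 'a" where
  "glued_a \<mu> = (if \<mu> = lam then c else A (index_oc \<mu>) \<mu>)"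

lemma glued_dia_ladder [simp]: "glued_dia (c k) = lam"
  by (simp add: glued_dia_def)

lemma glued_dia_gap: "c k < b \<Longrightarrow> b < c (Suc k) \<Longrightarrow> glued_dia b = D k b"
  using gap_not_ladder index_co_eq[OF less_imp_le] by (simp add: glued_dia_def)

lemma glued_ell_lam [simp]: "glued_ell lam = 1"
  by (simp add: glued_ell_def)

lemma glued_ell_ladder [simp]: "glued_ell (c k) = Suc k"
  using ladder_less[of k] by (auto simp: glued_ell_def index_co_ladder)

lemma glued_ell_gap:
  assumes "c k < b" "b \<le> c (Suc k)" and lim: "is_limit (c (Suc k))"
  shows "glued_ell b = L k b + k + 1"
proof (cases "b = c (Suc k)")
  case True
  interpret G: diamond_structure "osucc (c k)" "c (Suc k)" "D k" "L k" "A k"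
    using gap_structure[OF lim] .
  show ?thesis using G.ell_lam True by simp
next
  case False
  then have "b < c (Suc k)" using assms(2) by simp
  then show ?thesis
    using assms(1) gap_not_ladder index_co_eq[OF less_imp_le] ladder_less[of "Suc k"]
    by (auto simp: glued_ell_def)
qed

lemma glued_dia_gap_LIMs:
  assumes "c k < b" "b < c (Suc k)"
  shows "glued_dia b \<in> LIMs {c k<..c (Suc k)}"
proof -
  interpret G: diamond_structure "osucc (c k)" "c (Suc k)" "D k" "L k" "A k"
    using gap_structure[OF gap_limit[OF assms]] .
  show ?thesis using G.dia_image assms by (auto simp: gap_osucc_eqs glued_dia_gap)
qed

lemma glued_dia_image: "glued_dia ` {rho..<lam} = LIMs {rho<..lam}"
proof (intro equalityI subsetI)
  fix m assume "m \<in> glued_dia ` {rho..<lam}"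
  then obtain b where b: "rho \<le> b" "b < lam" and m: "m = glued_dia b" by auto
  from b show "m \<in> LIMs {rho<..lam}"
  proof (cases rule: ladder_cases)
    case ladder
    then show ?thesis using m ladder_limit rho_less_lam by (simp add: LIMs_def)
  next
    case (gap k)
    then show ?thesis using m glued_dia_gap_LIMs LIMs_segment_subset by blast
  qed
next
  fix m assume m: "m \<in> LIMs {rho<..lam}"
  show "m \<in> glued_dia ` {rho..<lam}"
  proof (cases "m = lam")
    case True
    then show ?thesis using glued_dia_ladder[of 0] ladder_0 rho_less_lam by force
  next
    case False
    then obtain k where lim: "is_limit (c (Suc k))" and mk: "m \<in> LIMs {c k<..c (Suc k)}"
      using limit_segment[OF m False] by blast
    interpret G: diamond_structure "osucc (c k)" "c (Suc k)" "D k" "L k" "A k"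
      using gap_structure[OF lim] .
    have "m \<in> D k ` {c k<..<c (Suc k)}"
      using G.dia_image mk by (simp add: gap_osucc_eqs)
    then obtain b where "b \<in> {c k<..<c (Suc k)}" "m = D k b" by blast
    then show ?thesis using gap_subset glued_dia_gap by force
  qed
qed

lemma glued_ell_pos: "0 < glued_ell b"
  by (simp add: glued_ell_def)

lemma glued_a_range:
  assumes "\<mu> \<in> LIMs {rho<..lam}"
  shows "glued_a \<mu> j \<in> {rho..<lam}"
proof (cases "\<mu> = lam")
  case True
  then show ?thesis using rho_le_ladder ladder_less by (simp add: glued_a_def)
next
  case False
  then obtain k where lim: "is_limit (c (Suc k))" and \<mu>: "\<mu> \<in> LIMs {c k<..c (Suc k)}"
    and "index_oc \<mu> = k"
    using limit_segment[OF assms] by blast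
  interpret G: diamond_structure "osucc (c k)" "c (Suc k)" "D k" "L k" "A k"
    using gap_structure[OF lim] .
  have "A k \<mu> j \<in> {c k<..<c (Suc k)}"
    using G.a_range \<mu> by (simp add: gap_osucc_eqs)
  moreover have "glued_a \<mu> = A k \<mu>"
    using False \<open>index_oc \<mu> = k\<close> by (simp add: glued_a_def)
  ultimately show ?thesis using gap_subset[of k] by auto
qed

lemma glued_dia_iterates:
  assumes "b \<in> {rho..<lam}"
  shows "\<exists>s>0. (glued_dia ^^ s) b = lam
    \<and> (\<forall>j<s. (glued_dia ^^ j) b < (glued_dia ^^ Suc j) b)"
proof -
  from assms have "rho \<le> b" "b < lam" by auto
  then show ?thesis
  proof (cases rule: ladder_cases)
    case ladder
    then show ?thesis using \<open>b < lam\<close> by (intro exI[of _ 1]) simp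
  next
    case (gap k)
    interpret G: diamond_structure "osucc (c k)" "c (Suc k)" "D k" "L k" "A k"
      using gap_structure[OF gap_limit[OF gap]] .
    obtain s where "s > 0" and s: "(D k ^^ s) b = c (Suc k)"
      and chain: "\<And>j. j < s \<Longrightarrow> (D k ^^ j) b < (D k ^^ Suc j) b"
      using G.dia_iterates gap by (auto simp: gap_osucc_eqs)
    have chain_less: "(D k ^^ i) b < (D k ^^ j) b" if "i < j" "j \<le> s" for i j
      by (rule lift_Suc_mono_less_ivl[where f = "\<lambda>j. (D k ^^ j) b" and N = "{..<s}"])
        (use chain that in auto)
    have in_gap: "c k < (D k ^^ j) b \<and> (D k ^^ j) b < c (Suc k)" if "j < s" for j
      using chain_less[of 0 j] chain_less[of j s] that gap s
      by (cases "j = 0") (auto intro: less_trans)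
    have agree: "(glued_dia ^^ j) b = (D k ^^ j) b" if "j \<le> s" for j
      using that by (induction j) (auto simp: in_gap glued_dia_gap)
    show ?thesis
    proof (intro exI[of _ "Suc s"] conjI allI impI)
      show "(glued_dia ^^ Suc s) b = lam" using agree[of s] s by simp
      fix j assume "j < Suc s"
      then consider "j < s" | "j = s" by linarith
      then show "(glued_dia ^^ j) b < (glued_dia ^^ Suc j) b"
      proof cases
        case 1
        then show ?thesis using agree[of j] agree[of "Suc j"] chain by simp
      next
        case 2
        then show ?thesis using agree[of s] s ladder_less by simp
      qed
    qed simp
  qed
qed

lemma glued_fibre_lam: "{b \<in> {rho..<lam}. glued_dia b = lam} = range c"
proof (intro equalityI subsetI)
  fix b assume "b \<in> {b \<in> {rho..<lam}. glued_dia b = lam}"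
  then have b: "rho \<le> b" "b < lam" and "glued_dia b = lam" by auto
  from b show "b \<in> range c"
  proof (cases rule: ladder_cases)
    case (gap k)
    then have "glued_dia b \<le> c (Suc k)"
      using glued_dia_gap_LIMs by (auto simp: LIMs_def)
    with \<open>glued_dia b = lam\<close> show ?thesis using ladder_less[of "Suc k"] by simp
  qed simp
qed (use rho_le_ladder ladder_less in auto)

lemma glued_fibre_gap:
  assumes "c k < \<mu>" "\<mu> \<le> c (Suc k)"
  shows "{b \<in> {rho..<lam}. glued_dia b = \<mu>} = {b \<in> {c k<..<c (Suc k)}. D k b = \<mu>}"
proof (intro equalityI subsetI)
  fix b assume "b \<in> {b \<in> {rho..<lam}. glued_dia b = \<mu>}"
  then have b: "rho \<le> b" "b < lam" and \<mu>: "glued_dia b = \<mu>" by auto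
  from b show "b \<in> {b \<in> {c k<..<c (Suc k)}. D k b = \<mu>}"
  proof (cases rule: ladder_cases)
    case ladder
    then have "\<mu> = lam" using \<mu> by simp
    then show ?thesis using assms(2) ladder_less[of "Suc k"] by simp
  next
    case (gap i)
    then have "c i < \<mu>" "\<mu> \<le> c (Suc i)"
      using glued_dia_gap_LIMs \<mu> by (auto simp: LIMs_def)
    then have "i = k" using segment_oc_unique[OF assms] by blast
    then show ?thesis using gap \<mu> glued_dia_gap[OF gap] by simp
  qed
next
  fix b assume "b \<in> {b \<in> {c k<..<c (Suc k)}. D k b = \<mu>}"
  then have "b \<in> {c k<..<c (Suc k)}" "glued_dia b = \<mu>" using glued_dia_gap by auto
  then show "b \<in> {b \<in> {rho..<lam}. glued_dia b = \<mu>}" using gap_subset[of k] by blast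
qed

lemma glued_fibre:
  assumes "\<mu> \<in> LIMs {rho<..lam}"
  shows "strict_mono (glued_a \<mu>) \<and> (\<forall>j. glued_a \<mu> j < \<mu>) \<and> (\<forall>g<\<mu>. \<exists>j. g < glued_a \<mu> j)
    \<and> {b \<in> {rho..<lam}. glued_dia b = \<mu>} = range (glued_a \<mu>)
    \<and> (\<forall>j. glued_ell (glued_a \<mu> j) = glued_ell \<mu> + j)"
proof (cases "\<mu> = lam")
  case True
  then have "glued_a \<mu> = c" by (simp add: glued_a_def)
  with True show ?thesis
    using ladder_strict_mono ladder_less ladder_cofinal glued_fibre_lam by simp
next
  case False
  then obtain k where \<mu>: "c k < \<mu>" "\<mu> \<le> c (Suc k)" and lim: "is_limit (c (Suc k))"
    and \<mu>_LIMs: "\<mu> \<in> LIMs {c k<..c (Suc k)}" and "index_oc \<mu> = k"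
    using limit_segment[OF assms] by blast
  interpret G: diamond_structure "osucc (c k)" "c (Suc k)" "D k" "L k" "A k"
    using gap_structure[OF lim] .
  have a: "glued_a \<mu> = A k \<mu>"
    using False \<open>index_oc \<mu> = k\<close> by (simp add: glued_a_def)
  have A_gap: "A k \<mu> j \<in> {c k<..<c (Suc k)}" for j
    using G.a_range \<mu>_LIMs by (simp add: gap_osucc_eqs)
  have "glued_ell (A k \<mu> j) = glued_ell \<mu> + j" for j
  proof -
    have "c k < A k \<mu> j" "A k \<mu> j \<le> c (Suc k)" using A_gap[of j] by auto
    then show ?thesis
      using G.ell_a[of \<mu> j] \<mu>_LIMs glued_ell_gap[OF _ _ lim] \<mu> by (simp add: gap_osucc_eqs)
  qed
  then show ?thesis
    using G.a_strict_mono G.a_less G.a_cofinal G.dia_fibre \<mu>_LIMs glued_fibre_gap[OF \<mu>]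
    by (simp add: a gap_osucc_eqs)
qed

lemma glued_ell_above_ladder:
  assumes "c k < g" "g < lam"
  shows "Suc k < glued_ell g"
proof -
  have "rho \<le> g" using rho_le_ladder[of k] assms(1) by simp
  from this assms(2) show ?thesis
  proof (cases rule: ladder_cases)
    case (ladder j)
    then show ?thesis using assms(1) ladder_less_iff by simp
  next
    case (gap j)
    have lim: "is_limit (c (Suc j))" using gap_limit gap .
    interpret G: diamond_structure "osucc (c j)" "c (Suc j)" "D j" "L j" "A j"
      using gap_structure[OF lim] .
    have "k < Suc j" using assms(1) gap(2) ladder_less_iff by (metis less_trans)
    moreover have "0 < L j g" using G.ell_pos gap by (simp add: gap_osucc_eqs)
    ultimately show ?thesis using glued_ell_gap[OF gap(1) less_imp_le[OF gap(2)] lim] by simp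
  qed
qed

lemma glued_between:
  assumes "b \<in> {rho..<lam}" "b < g" "g < glued_dia b"
  shows "glued_ell b < glued_ell g \<and> glued_dia g \<le> glued_dia b"
proof -
  from assms(1) have "rho \<le> b" "b < lam" by auto
  then show ?thesis
  proof (cases rule: ladder_cases)
    case (ladder k)
    then have g: "g \<in> {rho..<lam}" using assms by auto
    then have "glued_dia g \<le> lam"
      using glued_dia_image by (auto simp: LIMs_def)
    then show ?thesis using ladder g glued_ell_above_ladder[of k g] assms(2) by simp
  next
    case (gap k)
    have lim: "is_limit (c (Suc k))" using gap_limit gap .
    interpret G: diamond_structure "osucc (c k)" "c (Suc k)" "D k" "L k" "A k"
      using gap_structure[OF lim] .
    have "glued_dia b \<le> c (Suc k)"
      using glued_dia_gap_LIMs gap by (auto simp: LIMs_def)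
    then have g: "c k < g" "g < c (Suc k)" using gap assms(2,3) by auto
    have b: "b \<in> {osucc (c k)..<c (Suc k)}" using gap by (simp add: gap_osucc_eqs)
    have "glued_ell g = L k g + k + 1" "glued_ell b = L k b + k + 1"
      using glued_ell_gap[OF g(1) less_imp_le[OF g(2)] lim]
        glued_ell_gap[OF gap(1) less_imp_le[OF gap(2)] lim] .
    moreover have "glued_dia g = D k g" "glued_dia b = D k b"
      using glued_dia_gap g gap by blast+
    ultimately show ?thesis
      using G.ell_between[OF b] G.dia_between[OF b] assms(2,3) by simp
  qed
qed

lemma glued_ell_osucc:
  assumes "b \<in> {rho..<lam}"
  shows "glued_ell (osucc b) = glued_ell b + 1"
proof -
  from assms have "rho \<le> b" "b < lam" by auto
  then show ?thesis
  proof (cases rule: ladder_cases)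
    case (ladder k)
    show ?thesis
    proof (cases "c (Suc k) = osucc (c k)")
      case True
      then show ?thesis using ladder glued_ell_ladder[of "Suc k"] by simp
    next
      case False
      then have lim: "is_limit (c (Suc k))" using ladder_step by metis
      interpret G: diamond_structure "osucc (c k)" "c (Suc k)" "D k" "L k" "A k"
        using gap_structure[OF lim] .
      have "c k < osucc (c k)" "osucc (c k) \<le> c (Suc k)"
        using less_osucc osucc_leI ladder_less_iff by blast+
      then show ?thesis using ladder glued_ell_gap[OF _ _ lim] G.ell_rho by simp
    qed
  next
    case (gap k)
    have lim: "is_limit (c (Suc k))" using gap_limit gap .
    interpret G: diamond_structure "osucc (c k)" "c (Suc k)" "D k" "L k" "A k"
      using gap_structure[OF lim] .
    have "c k < osucc b" "osucc b \<le> c (Suc k)"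
      using gap less_osucc[of b] osucc_leI[of b] by (auto intro: less_trans)
    moreover have "b \<in> {osucc (c k)..<c (Suc k)}" using gap by (simp add: gap_osucc_eqs)
    ultimately show ?thesis
      using G.ell_osucc glued_ell_gap[OF _ _ lim] gap by simp
  qed
qed

lemma glued_diamond_structure: "diamond_structure rho lam glued_dia glued_ell glued_a"
  by unfold_locales
    (use glued_dia_image glued_ell_pos glued_a_range glued_dia_iterates glued_fibre
      glued_between glued_ell_osucc glued_ell_ladder[of 0] ladder_0 in auto)

end

lemma diamond_structure_exists:
  fixes rho lam :: "'a::wellorder"
  assumes "is_limit lam" and "countable {x. x < lam}" and "rho < lam"
  shows "\<exists>dia ell a. diamond_structure rho lam dia ell a"
  using assms
proof (induction lam arbitrary: rho rule: less_induct)
  case (less lam rho)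
  then obtain c where "ladder rho lam c" using ladder_exists by blast
  then interpret ladder rho lam c .
  have "\<exists>D L A. diamond_structure (osucc (c k)) (c (Suc k)) D L A"
    if lim: "is_limit (c (Suc k))" for k
  proof (rule less.IH)
    show "c (Suc k) < lam" by (rule ladder_less)
    show "countable {x. x < c (Suc k)}"
      by (rule countable_subset[OF _ less.prems(2)]) (use ladder_less[of "Suc k"] in auto)
    show "osucc (c k) < c (Suc k)"
      using osucc_less_limit[OF lim] ladder_less_iff by blast
  qed (rule lim)
  then obtain D L A where
    "\<And>k. is_limit (c (Suc k)) \<Longrightarrow> diamond_structure (osucc (c k)) (c (Suc k)) (D k) (L k) (A k)"
    by metis
  with \<open>ladder rho lam c\<close> interpret ladder_gluing rho lam c D L A
    by (simp add: ladder_gluing_def ladder_gluing_axioms_def)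
  show ?case using glued_diamond_structure by blast
qed

theorem lemma3p1:
  fixes lam rho :: "'a::wellorder"
  assumes "is_limit lam" and "countable {x. x < lam}"
    and "isolated rho" and "rho < lam"
  shows "\<exists>(dia :: 'a \<Rightarrow> 'a) (ell :: 'a \<Rightarrow> nat) (a :: 'a \<Rightarrow> nat \<Rightarrow> 'a).
    dia ` {rho..<lam} = LIMs {rho<..lam}
  \<and> (\<forall>b\<in>{rho..lam}. ell b > 0)
  \<and> (\<forall>\<mu>\<in>LIMs {rho<..lam}. \<forall>k. a \<mu> k \<in> {rho..<lam})
  \<and> (\<forall>b\<in>{rho..<lam}. \<exists>s>0. (dia ^^ s) b = lam \<and>
        (\<forall>k<s. (dia ^^ k) b < (dia ^^ Suc k) b))
  \<and> (\<forall>\<mu>\<in>LIMs {rho<..lam}.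
        strict_mono (a \<mu>)
      \<and> (\<forall>k. a \<mu> k < \<mu>) \<and> (\<forall>g<\<mu>. \<exists>k. g < a \<mu> k)
      \<and> {b\<in>{rho..<lam}. dia b = \<mu>} = range (a \<mu>)
      \<and> (\<forall>k. ell (a \<mu> k) = ell \<mu> + k))
  \<and> ell lam = 1 \<and> ell rho = 1
  \<and> (\<forall>b\<in>{rho..<lam}. \<forall>g. b < g \<and> g < dia b \<longrightarrow> ell g > ell b \<and> dia g \<le> dia b)
  \<and> (\<forall>b\<in>{rho..<lam}. ell (osucc b) = ell b + 1)"
proof -
  obtain dia ell a where "diamond_structure rho lam dia ell a"
    using diamond_structure_exists assms(1,2,4) by blast
  then interpret diamond_structure rho lam dia ell a .
  show ?thesis
    by (intro exI[of _ dia] exI[of _ ell] exI[of _ a] conjI ballI allI impI)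
      (assumption | erule conjE | rule dia_image ell_pos a_range dia_iterates a_strict_mono
        a_less a_cofinal dia_fibre ell_a ell_lam ell_rho ell_between dia_between ell_osucc)+
qed

end
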